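(* Let $0<q\leq 1$, $1\leq r\leq\infty$, $\varepsilon\geq 0$, $A\in\mathbb{R}^{m\times n}$, $D\in\mathbb{R}^{n\times d}$, $y\in\mathbb{R}^m$, and let $s$ be a positive integer. Let $\hat{f}$ be a solution of $$\min_{\tilde{f}\in\mathbb{R}^n}\|D^*\tilde{f}\|_q\quad\text{subject to}\quad\|A\tilde{f}-y\|_r\leq\varepsilon,$$ let $f\in\mathbb{R}^n$ satisfy $\|Af-y\|_r\leq\varepsilon$, and let $h=\hat{f}-f$. Let $\Omega$ be the index set of the $s$ largest entries of $D^*f$ in magnitude, and $T$ the index set of the $s$ largest entries of $D^*h$ in magnitude. Then $$\|Ah\|_q^q\leq m^{1-q/r}(2\varepsilon)^q$$ and $$\|D^*_{T^c}h\|_q^q\leq\|D^*_{T}h\|_q^q+2\|D^*_{\Omega^c}f\|_q^q.$$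
   Context: For $S\subset[d]$, $D_S^*x$ denotes the vector $D^*x$ restricted to the indices in $S$ (other entries zero), and $S^c=[d]\setminus S$. $\|u\|_q^q=\sum_j|u_j|^q$; $\|u\|_\infty=\max_j|u_j|$. *)

theory Defs
  imports "HOL-Analysis.Analysis" "HOL-Library.Extended_Real"
begin

definition lq_pow :: "real \<Rightarrow> real ^ 'k \<Rightarrow> real" where
  "lq_pow q u = (\<Sum>j\<in>UNIV. \<bar>u $ j\<bar> powr q)"

definition lr_norm :: "ereal \<Rightarrow> real ^ 'k \<Rightarrow> real" where
  "lr_norm r u = (if r = \<infinity> then Max (range (\<lambda>j. \<bar>u $ j\<bar>))
                  else (\<Sum>j\<in>UNIV. \<bar>u $ j\<bar> powr real_of_ereal r) powr (1 / real_of_ereal r))"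

definition q_over_r :: "real \<Rightarrow> ereal \<Rightarrow> real" where
  "q_over_r q r = (if r = \<infinity> then 0 else q / real_of_ereal r)"

definition restr :: "'k set \<Rightarrow> real ^ 'k \<Rightarrow> real ^ 'k" where
  "restr S v = (\<chi> i. if i \<in> S then v $ i else 0)"

definition top_s_set :: "nat \<Rightarrow> real ^ 'k \<Rightarrow> 'k set \<Rightarrow> bool" where
  "top_s_set s v S \<longleftrightarrow> card S = min s CARD('k) \<and>
     (\<forall>i\<in>S. \<forall>j. j \<notin> S \<longrightarrow> \<bar>v $ j\<bar> \<le> \<bar>v $ i\<bar>)"

end

theory Submission
  imports Defs
begin

text \<open>
  Both fhat and f lie in the r-ball of radius eps around y, so A h has r-norm at most 2 eps,
  and the power-mean inequality (Jensen for t \<mapsto> t^(r/q)) turns this into the bound on the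
  q-th power of the q-quasinorm at the price of the factor m^(1 - q/r).
  For the cone condition, minimality of fhat gives |D*f + D*h|_q^q \<le> |D*f|_q^q. Splitting both
  sides along \<Omega> and applying |a + b|^q \<le> |a|^q + |b|^q (true for q \<le> 1) entrywise yields
  |D*_{\<Omega>^c} h|_q^q \<le> |D*_\<Omega> h|_q^q + 2 |D*_{\<Omega>^c} f|_q^q. Replacing \<Omega> by T, which carries the
  largest entries of D*h among all sets of its size, can only strengthen this.
\<close>

lemma convex_on_powr_nonneg:
  fixes p :: real
  assumes "p \<ge> 1"
  shows "convex_on {0..} (\<lambda>x::real. x powr p)"
proof (rule convex_onI)
  fix t x y :: real
  assume t: "0 < t" "t < 1" and xy: "x \<in> {0..}" "y \<in> {0..}"
  show "((1 - t) *\<^sub>R x + t *\<^sub>R y) powr p \<le> (1 - t) * x powr p + t * y powr p"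
  proof (cases "x = 0 \<or> y = 0")
    case True
    \<comment> \<open>on the boundary the claim reduces to \<open>c powr p \<le> c\<close> for \<open>0 < c < 1\<close>\<close>
    have "(c * z) powr p \<le> c * z powr p" if "0 < c" "c < 1" "0 \<le> z" for c z :: real
      using that powr_le_one_le[of c p] assms
      by (simp add: powr_mult mult_right_mono)
    from this[of t y] this[of "1 - t" x] show ?thesis
      using True t xy assms by auto
  next
    case False
    with xy have "x \<in> {0<..}" "y \<in> {0<..}" by auto
    with convex_onD[OF powr_convex[OF assms], of t x y] t show ?thesis by simp
  qed
qed (simp add: convex_real_interval)

lemma powr_mean_le_mean_powr:
  fixes a :: "'a \<Rightarrow> real"
  assumes "finite S" "S \<noteq> {}" "\<And>i. i \<in> S \<Longrightarrow> 0 \<le> a i" "p \<ge> 1"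
  shows "((\<Sum>i\<in>S. a i) / card S) powr p \<le> (\<Sum>i\<in>S. a i powr p) / card S"
proof -
  have "card S > 0" using assms by (simp add: card_gt_0_iff)
  with convex_on_sum[OF assms(1,2) convex_on_powr_nonneg[OF assms(4)], of "\<lambda>_. 1 / card S" a] assms(3)
  have "(\<Sum>i\<in>S. (1 / card S) *\<^sub>R a i) powr p \<le> (\<Sum>i\<in>S. (1 / card S) * a i powr p)"
    by auto
  thus ?thesis by (simp add: sum_divide_distrib[symmetric] sum_distrib_left[symmetric])
qed

lemma sum_powr_le_card_powr_sum_powr:
  fixes a :: "'a \<Rightarrow> real"
  assumes "finite S" "\<And>i. i \<in> S \<Longrightarrow> 0 \<le> a i" "0 < q" "q \<le> p"
  shows "(\<Sum>i\<in>S. a i powr q) \<le> card S powr (1 - q / p) * (\<Sum>i\<in>S. a i powr p) powr (q / p)"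
proof (cases "S = {}")
  case False
  define m where "m = real (card S)"
  have m: "m > 0" using assms(1) False by (simp add: m_def card_gt_0_iff)
  have pq: "(a i powr q) powr (p / q) = a i powr p" for i
    using assms(3) by (simp add: powr_powr)
  have "((\<Sum>i\<in>S. a i powr q) / m) powr (p / q) \<le> (\<Sum>i\<in>S. a i powr p) / m"
    using powr_mean_le_mean_powr[of S "\<lambda>i. a i powr q" "p / q"] assms False
    unfolding m_def pq by simp
  then have "(((\<Sum>i\<in>S. a i powr q) / m) powr (p / q)) powr (q / p)
      \<le> ((\<Sum>i\<in>S. a i powr p) / m) powr (q / p)"
    using assms(3,4) by (intro powr_mono2) auto
  then have "(\<Sum>i\<in>S. a i powr q) / m \<le> (\<Sum>i\<in>S. a i powr p) powr (q / p) / m powr (q / p)"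
    using assms m by (simp add: powr_powr powr_divide sum_nonneg)
  then have "(\<Sum>i\<in>S. a i powr q) \<le> m * ((\<Sum>i\<in>S. a i powr p) powr (q / p) / m powr (q / p))"
    using m by (simp add: field_simps)
  also have "\<dots> = m powr (1 - q / p) * (\<Sum>i\<in>S. a i powr p) powr (q / p)"
    using m by (simp add: powr_diff)
  finally show ?thesis unfolding m_def .
qed simp

lemma abs_diff_powr_le:
  fixes x y p :: real
  assumes "p \<ge> 1"
  shows "\<bar>x - y\<bar> powr p \<le> 2 powr (p - 1) * (\<bar>x\<bar> powr p + \<bar>y\<bar> powr p)"
proof -
  have "\<bar>x - y\<bar> powr p \<le> (2 * ((1 - 1/2) *\<^sub>R \<bar>x\<bar> + (1/2) *\<^sub>R \<bar>y\<bar>)) powr p"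
    using assms by (intro powr_mono2) auto
  also have "\<dots> = 2 powr p * ((1 - 1/2) *\<^sub>R \<bar>x\<bar> + (1/2) *\<^sub>R \<bar>y\<bar>) powr p"
    by (subst powr_mult) auto
  also have "\<dots> \<le> 2 powr p * ((1 - 1/2) * \<bar>x\<bar> powr p + (1/2) * \<bar>y\<bar> powr p)"
    using convex_onD[OF convex_on_powr_nonneg[OF assms], of "1/2" "\<bar>x\<bar>" "\<bar>y\<bar>"]
    by (intro mult_left_mono) auto
  also have "\<dots> = 2 powr (p - 1) * (\<bar>x\<bar> powr p + \<bar>y\<bar> powr p)"
    by (simp add: powr_diff field_simps)
  finally show ?thesis .
qed

lemma powr_add_le_add_powr:
  fixes a b q :: real
  assumes "0 < q" "q \<le> 1" "0 \<le> a" "0 \<le> b"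
  shows "(a + b) powr q \<le> a powr q + b powr q"
proof (cases "a + b = 0")
  case False
  with assms have s: "a + b > 0" by simp
  have le_powr: "c \<le> c powr q" if "0 \<le> c" "c \<le> 1" for c :: real
    using powr_mono'[of q 1 c] that assms by simp
  have "1 = a / (a + b) + b / (a + b)" using s by (simp add: add_divide_distrib[symmetric])
  also have "\<dots> \<le> (a / (a + b)) powr q + (b / (a + b)) powr q"
    using assms s by (intro add_mono le_powr) auto
  also have "\<dots> = (a powr q + b powr q) / (a + b) powr q"
    using assms s by (simp add: powr_divide add_divide_distrib)
  finally show ?thesis using s by (simp add: le_divide_eq)
qed (use assms in simp)

lemma abs_add_powr_le:
  fixes a b q :: real
  assumes "0 < q" "q \<le> 1"
  shows "\<bar>a + b\<bar> powr q \<le> \<bar>a\<bar> powr q + \<bar>b\<bar> powr q"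
proof -
  have "\<bar>a + b\<bar> powr q \<le> (\<bar>a\<bar> + \<bar>b\<bar>) powr q"
    using assms by (intro powr_mono2) auto
  also have "\<dots> \<le> \<bar>a\<bar> powr q + \<bar>b\<bar> powr q"
    using assms by (intro powr_add_le_add_powr) auto
  finally show ?thesis .
qed

lemma lr_norm_finite:
  assumes "r \<noteq> \<infinity>"
  shows "lr_norm r u = (\<Sum>j\<in>UNIV. \<bar>u $ j\<bar> powr real_of_ereal r) powr (1 / real_of_ereal r)"
  using assms unfolding lr_norm_def by simp

lemma abs_le_lr_norm_infinity: "\<bar>u $ j\<bar> \<le> lr_norm \<infinity> u"
  unfolding lr_norm_def by simp

lemma lr_norm_nonneg: "0 \<le> lr_norm r u"
proof (cases "r = \<infinity>")
  case True
  have "0 \<le> \<bar>u $ undefined\<bar>" by simp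
  also have "\<dots> \<le> lr_norm r u" using True abs_le_lr_norm_infinity by simp
  finally show ?thesis .
qed (simp add: lr_norm_finite)

lemma lr_norm_le_iff:
  assumes "1 \<le> r" "r \<noteq> \<infinity>" "0 \<le> e"
  shows "lr_norm r u \<le> e \<longleftrightarrow> (\<Sum>j\<in>UNIV. \<bar>u $ j\<bar> powr real_of_ereal r) \<le> e powr real_of_ereal r"
    (is "_ \<longleftrightarrow> ?S \<le> e powr ?p")
proof -
  have p: "1 \<le> ?p" using assms by (cases r) auto
  have S: "0 \<le> ?S" by (simp add: sum_nonneg)
  have "?S powr (1 / ?p) \<le> e \<longleftrightarrow> ?S \<le> e powr ?p"
  proof
    assume "?S powr (1 / ?p) \<le> e"
    then have "(?S powr (1 / ?p)) powr ?p \<le> e powr ?p"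
      using p by (intro powr_mono2) auto
    then show "?S \<le> e powr ?p" using S p by (simp add: powr_powr)
  next
    assume "?S \<le> e powr ?p"
    then have "?S powr (1 / ?p) \<le> (e powr ?p) powr (1 / ?p)"
      using S p by (intro powr_mono2) auto
    then show "?S powr (1 / ?p) \<le> e" using assms(3) p by (simp add: powr_powr)
  qed
  then show ?thesis unfolding lr_norm_finite[OF assms(2)] .
qed

lemma lr_norm_diff_le:
  assumes "1 \<le> r" and "lr_norm r a \<le> e" and "lr_norm r b \<le> e"
  shows "lr_norm r (a - b) \<le> 2 * e"
proof -
  have e: "0 \<le> e" using assms(2) lr_norm_nonneg order_trans by blast
  show ?thesis
  proof (cases "r = \<infinity>")
    case True
    have "\<bar>(a - b) $ j\<bar> \<le> 2 * e" for j
      using abs_le_lr_norm_infinity[of a j] abs_le_lr_norm_infinity[of b j] assms True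
      by (simp add: abs_diff_le_iff abs_le_iff)
    then show ?thesis using True unfolding lr_norm_def by simp
  next
    case False
    define p where "p = real_of_ereal r"
    have p: "1 \<le> p" using assms(1) False by (cases r) (auto simp: p_def)
    have a: "(\<Sum>j\<in>UNIV. \<bar>a $ j\<bar> powr p) \<le> e powr p"
      and b: "(\<Sum>j\<in>UNIV. \<bar>b $ j\<bar> powr p) \<le> e powr p"
      using assms e False lr_norm_le_iff unfolding p_def by blast+
    have "(\<Sum>j\<in>UNIV. \<bar>(a - b) $ j\<bar> powr p)
        \<le> (\<Sum>j\<in>UNIV. 2 powr (p - 1) * (\<bar>a $ j\<bar> powr p + \<bar>b $ j\<bar> powr p))"
      using abs_diff_powr_le[OF p] by (intro sum_mono) simp
    also have "\<dots> \<le> 2 powr (p - 1) * (e powr p + e powr p)"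
      using a b by (simp add: sum_distrib_left[symmetric] sum.distrib)
    also have "\<dots> = (2 * e) powr p"
      using e by (simp add: powr_mult powr_diff)
    finally show ?thesis
      using lr_norm_le_iff[OF assms(1) False, of "2 * e" "a - b"] e unfolding p_def by simp
  qed
qed

lemma lq_pow_le_lr_norm:
  fixes u :: "real ^ 'k"
  assumes "0 < q" "q \<le> 1" "1 \<le> r"
  shows "lq_pow q u \<le> real CARD('k) powr (1 - q_over_r q r) * lr_norm r u powr q"
proof (cases "r = \<infinity>")
  case True
  then have "lq_pow q u \<le> real CARD('k) * lr_norm r u powr q"
    unfolding lq_pow_def
    using abs_le_lr_norm_infinity assms(1) by (intro sum_bounded_above powr_mono2) auto
  then show ?thesis using True by (simp add: q_over_r_def)
next
  case False
  define p where "p = real_of_ereal r"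
  have "q \<le> p" using assms False by (cases r) (auto simp: p_def)
  then have "lq_pow q u \<le> real CARD('k) powr (1 - q / p) * (\<Sum>j\<in>UNIV. \<bar>u $ j\<bar> powr p) powr (q / p)"
    unfolding lq_pow_def using assms(1) by (intro sum_powr_le_card_powr_sum_powr) auto
  then show ?thesis
    using False \<open>q \<le> p\<close> assms(1)
    by (simp add: lr_norm_finite q_over_r_def powr_powr p_def[symmetric] sum_nonneg)
qed

lemma lq_pow_restr: "lq_pow q (restr S v) = (\<Sum>j\<in>S. \<bar>v $ j\<bar> powr q)"
proof -
  have "lq_pow q (restr S v) = (\<Sum>j\<in>UNIV. if j \<in> S then \<bar>v $ j\<bar> powr q else 0)"
    unfolding lq_pow_def by (rule sum.cong) (auto simp: restr_def)
  then show ?thesis by (simp add: sum.If_cases)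
qed

lemma lq_pow_split: "lq_pow q v = lq_pow q (restr S v) + lq_pow q (restr (- S) v)"
proof -
  have "lq_pow q v = (\<Sum>j\<in>S. \<bar>v $ j\<bar> powr q) + (\<Sum>j\<in>- S. \<bar>v $ j\<bar> powr q)"
    using sum.subset_diff[of S UNIV "\<lambda>j. \<bar>v $ j\<bar> powr q"]
    unfolding lq_pow_def by (simp add: Compl_eq_Diff_UNIV add.commute)
  then show ?thesis by (simp only: lq_pow_restr)
qed

lemma sum_le_sum_top:
  fixes g :: "'k::finite \<Rightarrow> real"
  assumes "card W = card T" and top: "\<And>i j. i \<in> T \<Longrightarrow> j \<notin> T \<Longrightarrow> g j \<le> g i"
  shows "sum g W \<le> sum g T"
proof -
  have card_eq: "card (W - T) = card (T - W)"
    using assms(1) card_Int_Diff[of W T] card_Int_Diff[of T W] by (simp add: Int_commute)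
  have "sum g (W - T) \<le> sum g (T - W)"
  proof (cases "T - W = {}")
    case True
    with card_eq show ?thesis by simp
  next
    case False
    define c where "c = Min (g ` (T - W))"
    have "sum g (W - T) \<le> card (W - T) * c"
      using False top by (intro sum_bounded_above) (auto simp: c_def)
    also have "\<dots> = card (T - W) * c" using card_eq by simp
    also have "\<dots> \<le> sum g (T - W)"
      by (intro sum_bounded_below) (auto simp: c_def)
    finally show ?thesis .
  qed
  then show ?thesis
    using sum.Int_Diff[of W g T] sum.Int_Diff[of T g W] by (simp add: Int_commute)
qed

lemma lq_pow_restr_le_top:
  assumes "0 < q" and "top_s_set s v T" and "card W = card T"
  shows "lq_pow q (restr W v) \<le> lq_pow q (restr T v)"
  unfolding lq_pow_restr
  using assms unfolding top_s_set_def by (intro sum_le_sum_top powr_mono2) auto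

lemma lq_pow_cone:
  fixes x z :: "real ^ 'k"
  assumes "0 < q" "q \<le> 1" and min: "lq_pow q (x + z) \<le> lq_pow q x"
  shows "lq_pow q (restr (- S) z) \<le> lq_pow q (restr S z) + 2 * lq_pow q (restr (- S) x)"
proof -
  have on_S: "lq_pow q (restr S x) - lq_pow q (restr S z) \<le> lq_pow q (restr S (x + z))"
    unfolding lq_pow_restr sum_subtractf[symmetric]
    using abs_add_powr_le[OF assms(1,2), of "x $ j + z $ j" "- z $ j" for j]
    by (intro sum_mono) (simp add: diff_le_eq add.commute)
  have off_S: "lq_pow q (restr (- S) z) - lq_pow q (restr (- S) x) \<le> lq_pow q (restr (- S) (x + z))"
    unfolding lq_pow_restr sum_subtractf[symmetric]
    using abs_add_powr_le[OF assms(1,2), of "x $ j + z $ j" "- x $ j" for j]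
    by (intro sum_mono) (simp add: diff_le_eq add.commute)
  show ?thesis
    using min on_S off_S lq_pow_split[of q "x + z" S] lq_pow_split[of q x S] by simp
qed

theorem lemma2p9:
  fixes q :: real and r :: ereal and \<epsilon> :: real
    and A :: "real ^ 'n ^ 'm" and D :: "real ^ 'd ^ 'n" and y :: "real ^ 'm"
    and s :: nat and fhat f :: "real ^ 'n" and \<Omega> T :: "'d set"
  assumes "0 < q" "q \<le> 1" "1 \<le> r" "\<epsilon> \<ge> 0" "s > 0"
    and fhat_feas: "lr_norm r (A *v fhat - y) \<le> \<epsilon>"
    and fhat_min: "\<forall>g. lr_norm r (A *v g - y) \<le> \<epsilon> \<longrightarrow>
                       lq_pow q (transpose D *v fhat) \<le> lq_pow q (transpose D *v g)"
    and f_feas: "lr_norm r (A *v f - y) \<le> \<epsilon>"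
    and \<Omega>: "top_s_set s (transpose D *v f) \<Omega>"
    and T: "top_s_set s (transpose D *v (fhat - f)) T"
  shows "lq_pow q (A *v (fhat - f)) \<le> real CARD('m) powr (1 - q_over_r q r) * (2 * \<epsilon>) powr q
         \<and> lq_pow q (restr (- T) (transpose D *v (fhat - f)))
           \<le> lq_pow q (restr T (transpose D *v (fhat - f)))
             + 2 * lq_pow q (restr (- \<Omega>) (transpose D *v f))"
proof
  have "A *v (fhat - f) = (A *v fhat - y) - (A *v f - y)"
    by (simp add: matrix_vector_mult_diff_distrib)
  then have "lr_norm r (A *v (fhat - f)) \<le> 2 * \<epsilon>"
    using lr_norm_diff_le[OF assms(3) fhat_feas f_feas] by simp
  then have "lr_norm r (A *v (fhat - f)) powr q \<le> (2 * \<epsilon>) powr q"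
    using assms(1) lr_norm_nonneg by (intro powr_mono2) auto
  then have "real CARD('m) powr (1 - q_over_r q r) * lr_norm r (A *v (fhat - f)) powr q
      \<le> real CARD('m) powr (1 - q_over_r q r) * (2 * \<epsilon>) powr q"
    by (rule mult_left_mono) simp
  with lq_pow_le_lr_norm[OF assms(1-3), of "A *v (fhat - f)"]
  show "lq_pow q (A *v (fhat - f)) \<le> real CARD('m) powr (1 - q_over_r q r) * (2 * \<epsilon>) powr q"
    by linarith
next
  define x where "x = transpose D *v f"
  define z where "z = transpose D *v (fhat - f)"
  have "transpose D *v fhat = x + z"
    unfolding x_def z_def by (simp add: matrix_vector_mult_diff_distrib)
  then have "lq_pow q (x + z) \<le> lq_pow q x"
    using fhat_min f_feas unfolding x_def by auto
  then have cone: "lq_pow q (restr (- \<Omega>) z) \<le> lq_pow q (restr \<Omega> z) + 2 * lq_pow q (restr (- \<Omega>) x)"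
    by (rule lq_pow_cone[OF assms(1,2)])
  have "card \<Omega> = card T" using \<Omega> T unfolding top_s_set_def by simp
  then have "lq_pow q (restr \<Omega> z) \<le> lq_pow q (restr T z)"
    using lq_pow_restr_le_top[OF assms(1) T] unfolding z_def by simp
  then show "lq_pow q (restr (- T) z) \<le> lq_pow q (restr T z) + 2 * lq_pow q (restr (- \<Omega>) x)"
    using cone lq_pow_split[of q z T] lq_pow_split[of q z \<Omega>] by linarith
qed

end
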